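(* Let $A$ be associative and let $f,g\in\mathcal{S}(\Omega)$. If $x\in\Omega$ is real and $x\in V(f)\cup V(g)$, then $x\in V(f\cdot g)$. More generally: (1) If $\mathbb{S}_x\subseteq V(f)$ or $\mathbb{S}_x\subseteq V(g)$, then $\mathbb{S}_x\subseteq V(f\cdot g)$. If $x\in\Omega\setminus\mathbb{R}$ and $f'_s(x)$, $g'_s(x)$ and $(f\cdot g)'_s(x)$ belong to $C_A$, then: (2) If $\mathbb{S}_x\cap V(f)=\{y\}$ and $\mathbb{S}_x\cap V(g)=\emptyset$, then $\mathbb{S}_x\cap V(f\cdot g)=\{y\}$. (3) If $\mathbb{S}_x\cap V(f)=\emptyset$ and $\mathbb{S}_x\cap V(g)=\{z\}$, then $f^c(z)\in C_A\setminus\{0\}$ and $\mathbb{S}_x\cap V(f\cdot g)=\{f^c(z)^{-1}zf^c(z)\}$. (4) If $\mathbb{S}_x\cap V(f)=\{y\}$ and $\mathbb{S}_x\cap V(g)=\{z\}$, then either (a) $\mathbb{S}_x\subseteq V(f\cdot g)$, or (b) $\mathbb{S}_x\cap V(f\cdot g)=\{y\}$, depending on whether or not $y^cf'_s(x)=f'_s(x)z$.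
   Context: Let $A$ be a finite-dimensional associative real algebra with unit $1$ ($\mathbb{R}$ identified with $\mathbb{R}1$), with a $^*$-involution $x\mapsto x^c$ (real linear, $(x^c)^c=x$, $(xy)^c=y^cx^c$, $r^c=r$ for $r\in\mathbb{R}$). Let $t(x)=x+x^c$, $n(x)=xx^c$. $C_A=\{0\}\cup\{a:n(a),n(a^c)$ are invertible elements of the center of $A\}$. $\mathbb{S}_A=\{J\in A:t(J)=0,n(J)=1\}$ (assumed non-empty), $Q_A=\mathbb{R}\cup\{x:t(x),n(x)\in\mathbb{R},4n(x)>t(x)^2\}$; every $x\in Q_A$ is $\alpha+\beta J$ with $\alpha,\beta\in\mathbb{R}$, $J\in\mathbb{S}_A$; $x^c=\alpha-\beta J$, $\mathrm{im}(x)=x-t(x)/2$, $\mathbb{S}_x=\{\alpha+\beta I:I\in\mathbb{S}_A\}$. Let $D\subseteq\mathbb{C}$ be non-empty, invariant under conjugation, $\Omega=\{\alpha+\beta J:\alpha+i\beta\in D,J\in\mathbb{S}_A\}$. $A_{\mathbb{C}}=\{a+\imath b\}$ with $(a+\imath b)(a'+\imath b')=aa'-bb'+\imath(ab'+ba')$, $\overline{a+\imath b}=a-\imath b$, $(a+\imath b)^c=a^c+\imath b^c$. A stem function $F=F_1+\imath F_2:D\to A_{\mathbb{C}}$ satisfies $F(\bar z)=\overline{F(z)}$ and induces the slice function $f=\mathcal{I}(F)$, $f(\alpha+\beta J)=F_1(\alpha+i\beta)+JF_2(\alpha+i\beta)$; $\mathcal{S}(\Omega)$ is the set of slice functions; slice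 product $f\cdot g=\mathcal{I}(FG)$; $f^c=\mathcal{I}(F^c)$ with $F^c(z)=F(z)^c$. $V(h)=\{x:h(x)=0\}$. $f'_s(x)=\frac12\mathrm{im}(x)^{-1}(f(x)-f(x^c))$ for $x\in\Omega\setminus\mathbb{R}$. *)

theory Defs
  imports Complex_Main
begin

text \<open>A finite-dimensional associative real algebra with unit is modelled as a type of
  class real_algebra_1 (associative ring with unit, compatible real scalar multiplication,
  reals embedded via of_real) together with finite dimensionality.
  The star-involution is an explicit parameter cj.\<close>

definition fin_dim_alg :: "'a::real_algebra_1 itself \<Rightarrow> bool" where
  "fin_dim_alg _ \<longleftrightarrow> (\<exists>B::'a set. finite B \<and> span B = UNIV)"

definition star_involution :: "('a::real_algebra_1 \<Rightarrow> 'a) \<Rightarrow> bool" where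
  "star_involution cj \<longleftrightarrow>
     (\<forall>x y. cj (x + y) = cj x + cj y) \<and>
     (\<forall>r x. cj (r *\<^sub>R x) = r *\<^sub>R cj x) \<and>
     (\<forall>x. cj (cj x) = x) \<and>
     (\<forall>x y. cj (x * y) = cj y * cj x) \<and>
     (\<forall>r. cj (of_real r) = of_real r)"

definition tr :: "('a::real_algebra_1 \<Rightarrow> 'a) \<Rightarrow> 'a \<Rightarrow> 'a" where
  "tr cj x = x + cj x"

definition nrm :: "('a::real_algebra_1 \<Rightarrow> 'a) \<Rightarrow> 'a \<Rightarrow> 'a" where
  "nrm cj x = x * cj x"

definition center :: "'a::real_algebra_1 set" where
  "center = {z. \<forall>y. z * y = y * z}"

definition invertible_el :: "'a::real_algebra_1 \<Rightarrow> bool" where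
  "invertible_el a \<longleftrightarrow> (\<exists>b. a * b = 1 \<and> b * a = 1)"

definition inv_el :: "'a::real_algebra_1 \<Rightarrow> 'a" where
  "inv_el a = (THE b. a * b = 1 \<and> b * a = 1)"

definition CA :: "('a::real_algebra_1 \<Rightarrow> 'a) \<Rightarrow> 'a set" where
  "CA cj = {0} \<union> {a. nrm cj a \<in> center \<and> invertible_el (nrm cj a)
                    \<and> nrm cj (cj a) \<in> center \<and> invertible_el (nrm cj (cj a))}"

definition SA :: "('a::real_algebra_1 \<Rightarrow> 'a) \<Rightarrow> 'a set" where
  "SA cj = {J. tr cj J = 0 \<and> nrm cj J = 1}"

definition Omega :: "('a::real_algebra_1 \<Rightarrow> 'a) \<Rightarrow> complex set \<Rightarrow> 'a set" where
  "Omega cj D = {of_real (Re z) + Im z *\<^sub>R J | z J. z \<in> D \<and> J \<in> SA cj}"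

definition Sx :: "('a::real_algebra_1 \<Rightarrow> 'a) \<Rightarrow> 'a \<Rightarrow> 'a set" where
  "Sx cj x = {y. \<exists>\<alpha> \<beta> J I. J \<in> SA cj \<and> I \<in> SA cj \<and>
                  x = of_real \<alpha> + \<beta> *\<^sub>R J \<and> y = of_real \<alpha> + \<beta> *\<^sub>R I}"

definition im_part :: "('a::real_algebra_1 \<Rightarrow> 'a) \<Rightarrow> 'a \<Rightarrow> 'a" where
  "im_part cj x = x - (1/2) *\<^sub>R tr cj x"

text \<open>Elements of the complexification A_C = A + i A are represented as pairs (a, b).\<close>
definition acmult :: "'a::real_algebra_1 \<times> 'a \<Rightarrow> 'a \<times> 'a \<Rightarrow> 'a \<times> 'a" where
  "acmult p q = (fst p * fst q - snd p * snd q, fst p * snd q + snd p * fst q)"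

definition is_stem :: "complex set \<Rightarrow> (complex \<Rightarrow> 'a::real_algebra_1 \<times> 'a) \<Rightarrow> bool" where
  "is_stem D F \<longleftrightarrow> (\<forall>z\<in>D. F (cnj z) = (fst (F z), - snd (F z)))"

definition slice :: "('a::real_algebra_1 \<Rightarrow> 'a) \<Rightarrow> (complex \<Rightarrow> 'a \<times> 'a) \<Rightarrow> 'a \<Rightarrow> 'a" where
  "slice cj F x = (SOME v. \<exists>\<alpha> \<beta> J. J \<in> SA cj \<and> x = of_real \<alpha> + \<beta> *\<^sub>R J \<and>
                     v = fst (F (Complex \<alpha> \<beta>)) + J * snd (F (Complex \<alpha> \<beta>)))"

definition stem_prod :: "(complex \<Rightarrow> 'a::real_algebra_1 \<times> 'a) \<Rightarrow> (complex \<Rightarrow> 'a \<times> 'a) \<Rightarrow> complex \<Rightarrow> 'a \<times> 'a" where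
  "stem_prod F G z = acmult (F z) (G z)"

definition stem_cj :: "('a::real_algebra_1 \<Rightarrow> 'a) \<Rightarrow> (complex \<Rightarrow> 'a \<times> 'a) \<Rightarrow> complex \<Rightarrow> 'a \<times> 'a" where
  "stem_cj cj F z = (cj (fst (F z)), cj (snd (F z)))"

definition zeros :: "'a set \<Rightarrow> ('a \<Rightarrow> 'a::zero) \<Rightarrow> 'a set" where
  "zeros \<Omega> h = {x \<in> \<Omega>. h x = 0}"

definition sph_deriv :: "('a::real_algebra_1 \<Rightarrow> 'a) \<Rightarrow> ('a \<Rightarrow> 'a) \<Rightarrow> 'a \<Rightarrow> 'a" where
  "sph_deriv cj f x = (1/2) *\<^sub>R (inv_el (im_part cj x) * (f x - f (cj x)))"

end

theory Submission imports Defs begin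

text \<open>A slice function with stem value \<open>(a, b)\<close> at \<open>\<alpha> + i\<beta>\<close> takes the value
  \<open>a + I b\<close> at \<open>\<alpha> + \<beta>I\<close>, so its zeros on \<open>\<bbbS>\<^sub>x\<close> correspond to the units \<open>I \<in> \<bbbS>\<^sub>A\<close> with
  \<open>a + I b = 0\<close>, and the slice product has stem value \<open>(ac - bd, ad + bc)\<close>. Everything thus
  reduces to algebra in \<open>A\<close>: a zero \<open>I\<^sub>0\<close> of \<open>a + I b\<close> is also a zero of
  \<open>(ac - bd) + I (ad + bc)\<close>, and the latter has at most one zero as soon as \<open>e = ad + bc\<close> is a
  nonzero element of \<open>C\<^sub>A\<close>, hence invertible. Since \<open>f'\<^sub>s(x) = b/\<beta>\<close>, the hypotheses on the
  spherical derivatives say \<open>b, d, e \<in> C\<^sub>A\<close>. If \<open>g\<close> vanishes at \<open>\<alpha> + \<beta>I\<^sub>1\<close> then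
  \<open>e = (a - b I\<^sub>1) d\<close>, so \<open>e = 0\<close> exactly when \<open>a = b I\<^sub>1\<close>, the condition of case (4); when \<open>f\<close> has no zero on \<open>\<bbbS>\<^sub>x\<close> the zero
  of the product is \<open>I\<^sub>1\<close> conjugated by \<open>w = (a - b I\<^sub>1)\<^sup>c\<close>, because \<open>n(w)\<close> is central.\<close>

lemma inv_el_eq: "a * b = 1 \<Longrightarrow> b * a = 1 \<Longrightarrow> inv_el a = (b::'a::real_algebra_1)"
  unfolding inv_el_def
  by (rule the_equality) (auto, metis mult.assoc mult_1_left mult_1_right)

lemma center_commute: "a \<in> center \<Longrightarrow> a * x = x * a"
  unfolding center_def by simp

lemma center_mult: "a \<in> center \<Longrightarrow> b \<in> center \<Longrightarrow> a * b \<in> (center::'a::real_algebra_1 set)"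
proof -
  assume a: "a \<in> center" and b: "b \<in> center"
  have "a * b * y = y * (a * b)" for y
  proof -
    have "a * b * y = a * (y * b)" using b unfolding center_def by (simp add: mult.assoc)
    also have "\<dots> = (a * y) * b" by (simp add: mult.assoc)
    also have "\<dots> = y * (a * b)" using a unfolding center_def by (simp add: mult.assoc)
    finally show ?thesis .
  qed
  then show ?thesis unfolding center_def by simp
qed

lemma center_inverse:
  assumes "M \<in> center" "X * M = 1" "M * X = (1::'a::real_algebra_1)"
  shows "X \<in> center"
  unfolding center_def
proof (intro CollectI allI)
  fix y
  have "X * y = X * y * (M * X)" using assms by simp
  also have "\<dots> = X * (y * M) * X" by (simp add: mult.assoc)
  also have "\<dots> = X * (M * y) * X" using assms(1) unfolding center_def by simp
  also have "\<dots> = y * X" using assms(2) by (metis mult.assoc mult_1_left)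
  finally show "X * y = y * X" .
qed

lemma invertible_el_mult:
  "invertible_el a \<Longrightarrow> invertible_el b \<Longrightarrow> invertible_el (a * (b::'a::real_algebra_1))"
  unfolding invertible_el_def
proof (elim exE conjE)
  fix a' b' assume "a * a' = 1" "a' * a = 1" "b * b' = 1" "b' * b = 1"
  then have "a * b * (b' * a') = 1 \<and> b' * a' * (a * b) = 1" by (metis mult.assoc mult_1_left)
  then show "\<exists>c. a * b * c = 1 \<and> c * (a * b) = 1" by blast
qed

lemma neg_eq_self_iff: "- x = x \<longleftrightarrow> x = (0::'a::real_vector)"
proof
  assume "- x = x"
  then have "(2::real) *\<^sub>R x = 0"
    by (metis add.right_inverse scaleR_2)
  then show "x = 0"
    by simp
qed simp

lemma stem_prod_eq:
  "stem_prod F G z = (fst (F z) * fst (G z) - snd (F z) * snd (G z),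
                      fst (F z) * snd (G z) + snd (F z) * fst (G z))"
  unfolding stem_prod_def acmult_def by simp

lemma is_stem_stem_prod: "is_stem D F \<Longrightarrow> is_stem D G \<Longrightarrow> is_stem D (stem_prod F G)"
  unfolding is_stem_def by (simp add: stem_prod_eq)

lemma stem_real:
  assumes "is_stem D F" "Complex \<alpha> 0 \<in> D"
  shows "snd (F (Complex \<alpha> 0)) = 0"
proof -
  have "cnj (Complex \<alpha> 0) = Complex \<alpha> 0"
    by (simp add: complex_eq_iff)
  with assms have "snd (F (Complex \<alpha> 0)) = - snd (F (Complex \<alpha> 0))"
    unfolding is_stem_def by (metis snd_conv)
  then show ?thesis
    by (metis neg_eq_self_iff)
qed

lemma inj_image_eq_singleton:
  assumes "inj f" "f ` A = {y}"
  obtains x where "A = {x}" "y = f x"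
proof -
  have "y \<in> f ` A"
    using assms(2) by simp
  then obtain x where "x \<in> A" "y = f x"
    by blast
  with assms have "f ` A = f ` {x}"
    by simp
  then have "A = {x}"
    by (simp only: inj_image_eq_iff[OF assms(1)])
  with \<open>y = f x\<close> that show thesis
    by blast
qed

lemma conj_of_real_plus_scaleR:
  assumes "u * w = 1"
  shows "u * (of_real \<alpha> + \<beta> *\<^sub>R I) * w = of_real \<alpha> + \<beta> *\<^sub>R (u * I * w :: 'a::real_algebra_1)"
proof -
  have "u * (of_real \<alpha> + \<beta> *\<^sub>R I) * w = \<alpha> *\<^sub>R (u * w) + \<beta> *\<^sub>R (u * I * w)"
    by (simp add: of_real_def distrib_left distrib_right)
  with assms show ?thesis
    by (simp add: of_real_def)
qed

locale star_algebra =
  fixes cj :: "'a::real_algebra_1 \<Rightarrow> 'a"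
  assumes star_involution: "star_involution cj"
begin

lemma cj_add [simp]: "cj (x + y) = cj x + cj y"
  and cj_scaleR [simp]: "cj (r *\<^sub>R x) = r *\<^sub>R cj x"
  and cj_cj [simp]: "cj (cj x) = x"
  and cj_mult [simp]: "cj (x * y) = cj y * cj x"
  and cj_of_real [simp]: "cj (of_real r) = of_real r"
  using star_involution by (simp_all add: star_involution_def)

lemma cj_one [simp]: "cj 1 = 1"
  using cj_of_real[of 1] by simp

lemma cj_zero [simp]: "cj 0 = 0"
  using cj_of_real[of 0] by simp

lemma cj_minus [simp]: "cj (- x) = - cj x"
  using cj_scaleR[of "-1" x] by simp

lemma cj_diff [simp]: "cj (x - y) = cj x - cj y"
  using cj_add[of x "- y"] by simp

lemma SA_iff: "J \<in> SA cj \<longleftrightarrow> cj J = - J \<and> J * J = - 1"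
proof -
  have "J + cj J = 0 \<longleftrightarrow> cj J = - J"
    by (metis add.commute eq_neg_iff_add_eq_0)
  moreover have "J * - J = 1 \<longleftrightarrow> J * J = - 1"
    by (metis minus_minus mult_minus_right)
  ultimately show ?thesis
    unfolding SA_def tr_def nrm_def by auto
qed

lemma SA_cj: "J \<in> SA cj \<Longrightarrow> cj J = - J"
  and SA_mult_self: "J \<in> SA cj \<Longrightarrow> J * J = - 1"
  by (simp_all add: SA_iff)

lemma SA_mult_mult: "J \<in> SA cj \<Longrightarrow> J * (J * x) = - x"
  by (simp flip: mult.assoc add: SA_mult_self)

lemma SA_uminus: "J \<in> SA cj \<Longrightarrow> - J \<in> SA cj"
  by (simp add: SA_iff)

lemma SA_nonzero: "J \<in> SA cj \<Longrightarrow> J \<noteq> 0"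
  using SA_mult_self by fastforce

lemma SA_uminus_neq: "J \<in> SA cj \<Longrightarrow> - J \<noteq> J"
  using SA_nonzero by (simp add: neg_eq_self_iff)

lemma real_plus_SA_eqD:
  assumes J: "J \<in> SA cj" and J': "J' \<in> SA cj"
    and eq: "of_real \<alpha> + \<beta> *\<^sub>R J = of_real \<alpha>' + \<beta>' *\<^sub>R J'"
  shows "\<alpha>' = \<alpha> \<and> \<beta>' *\<^sub>R J' = \<beta> *\<^sub>R J \<and> (\<beta>' = \<beta> \<or> \<beta>' = - \<beta>)"
proof -
  have "of_real \<alpha> - \<beta> *\<^sub>R J = of_real \<alpha>' - \<beta>' *\<^sub>R J'"
    using arg_cong[OF eq, of cj] by (simp add: SA_cj[OF J] SA_cj[OF J'])
  then have "of_real \<alpha> + \<beta> *\<^sub>R J + (of_real \<alpha> - \<beta> *\<^sub>R J)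
      = of_real \<alpha>' + \<beta>' *\<^sub>R J' + (of_real \<alpha>' - \<beta>' *\<^sub>R J')"
    using eq by simp
  then have "of_real \<alpha> + of_real \<alpha> = (of_real \<alpha>' + of_real \<alpha>' :: 'a)"
    by (simp add: algebra_simps)
  then have "of_real (\<alpha> + \<alpha>) = (of_real (\<alpha>' + \<alpha>') :: 'a)"
    by (simp only: of_real_add)
  then have \<alpha>: "\<alpha>' = \<alpha>"
    by (simp only: of_real_eq_iff)
  with eq have \<beta>J: "\<beta>' *\<^sub>R J' = \<beta> *\<^sub>R J"
    by simp
  have "of_real (- (\<beta>' * \<beta>')) = (of_real (- (\<beta> * \<beta>)) :: 'a)"
    using arg_cong[OF \<beta>J, of "\<lambda>y. y * y"] SA_mult_self[OF J] SA_mult_self[OF J']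
    by (simp add: of_real_def)
  then have "\<beta>' = \<beta> \<or> \<beta>' = - \<beta>"
    by (simp only: of_real_eq_iff) (simp add: square_eq_iff)
  with \<alpha> \<beta>J show ?thesis
    by blast
qed

lemma real_plus_SA_in_Reals_iff:
  assumes J: "J \<in> SA cj"
  shows "of_real \<alpha> + \<beta> *\<^sub>R J \<in> \<real> \<longleftrightarrow> \<beta> = 0"
proof
  assume "of_real \<alpha> + \<beta> *\<^sub>R J \<in> \<real>"
  then obtain r where "of_real \<alpha> + \<beta> *\<^sub>R J = of_real r + 0 *\<^sub>R J"
    by (auto elim: Reals_cases)
  then show "\<beta> = 0"
    using real_plus_SA_eqD[OF J J] SA_nonzero[OF J] by fastforce
qed simp

lemma CA_invertible:
  assumes "b \<in> CA cj" "b \<noteq> 0"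
  shows "invertible_el b"
proof -
  from assms obtain N M where N: "b * cj b * N = 1" and M: "M * (cj b * b) = 1"
    unfolding CA_def nrm_def invertible_el_def by auto
  have "M * cj b = M * cj b * (b * (cj b * N))"
    using N by (simp add: mult.assoc)
  also have "\<dots> = cj b * N"
    using M by (metis mult.assoc mult_1_left)
  finally have "cj b * N * b = 1"
    using M by (metis mult.assoc)
  with N show ?thesis
    unfolding invertible_el_def by (metis mult.assoc)
qed

lemma CA_cj: "p \<in> CA cj \<Longrightarrow> cj p \<in> CA cj"
  unfolding CA_def by auto

lemma nrm_mult_central:
  assumes "nrm cj q \<in> center"
  shows "nrm cj (p * q) = nrm cj q * nrm cj p"
proof -
  have "nrm cj (p * q) = p * nrm cj q * cj p"
    unfolding nrm_def by (simp add: mult.assoc)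
  also have "\<dots> = nrm cj q * p * cj p"
    by (simp only: center_commute[OF assms])
  finally show ?thesis
    by (simp only: nrm_def mult.assoc)
qed

lemma CA_mult:
  assumes p: "p \<in> CA cj" and q: "q \<in> CA cj"
  shows "p * q \<in> CA cj"
proof (cases "p = 0 \<or> q = 0")
  case False
  then have "nrm cj p \<in> center" "invertible_el (nrm cj p)"
    "nrm cj (cj p) \<in> center" "invertible_el (nrm cj (cj p))"
    "nrm cj q \<in> center" "invertible_el (nrm cj q)"
    "nrm cj (cj q) \<in> center" "invertible_el (nrm cj (cj q))"
    using p q unfolding CA_def by auto
  moreover have "nrm cj (cj (p * q)) = nrm cj (cj p) * nrm cj (cj q)"
    using nrm_mult_central[of "cj p" "cj q"] calculation(3) by simp
  ultimately show ?thesis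
    unfolding CA_def by (simp add: nrm_mult_central center_mult invertible_el_mult)
qed (auto simp: CA_def)

lemma CA_inverse:
  assumes d: "d \<in> CA cj" and inv: "d * di = 1" "di * d = 1"
  shows "di \<in> CA cj"
proof -
  have "d \<noteq> 0"
    using inv by auto
  then have central: "nrm cj d \<in> center" "nrm cj (cj d) \<in> center"
    using d unfolding CA_def by auto
  have cj_d: "cj di * cj d = 1" "cj d * cj di = 1"
    by (simp_all flip: cj_mult add: inv)
  have cj_inv: "cj di * (cj d * x) = x" "cj d * (cj di * x) = x" for x
    by (simp_all add: cj_d flip: mult.assoc)
  have inv_d: "di * (d * x) = x" "d * (di * x) = x" for x
    using inv by (simp_all flip: mult.assoc)
  have "nrm cj di * nrm cj (cj d) = 1" "nrm cj (cj d) * nrm cj di = 1"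
    "nrm cj (cj di) * nrm cj d = 1" "nrm cj d * nrm cj (cj di) = 1"
    unfolding nrm_def by (simp_all add: mult.assoc cj_d cj_inv inv_d inv)
  with central show ?thesis
    unfolding CA_def invertible_el_def by (blast intro: center_inverse)
qed

lemma CA_scaleR:
  assumes b: "b \<in> CA cj"
  shows "r *\<^sub>R b \<in> CA cj"
proof (cases "r = 0 \<or> b = 0")
  case False
  have scaled: "s *\<^sub>R y \<in> center \<and> invertible_el (s *\<^sub>R y)"
    if s: "s \<noteq> 0" and y: "y \<in> center" "invertible_el y" for s y
  proof -
    obtain y' where "y * y' = 1" "y' * y = 1"
      using y(2) unfolding invertible_el_def by blast
    then have "invertible_el (s *\<^sub>R y)"
      unfolding invertible_el_def using s by (intro exI[of _ "(1 / s) *\<^sub>R y'"]) simp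
    with y(1) show ?thesis
      unfolding center_def by simp
  qed
  have "nrm cj (r *\<^sub>R b) = (r * r) *\<^sub>R nrm cj b" "nrm cj (cj (r *\<^sub>R b)) = (r * r) *\<^sub>R nrm cj (cj b)"
    unfolding nrm_def by simp_all
  with b False scaled[of "r * r"] show ?thesis
    unfolding CA_def by auto
qed (auto simp: CA_def)

lemma SA_conj:
  assumes w: "w \<in> CA cj" and inv: "w * wi = 1" "wi * w = 1" and I: "I \<in> SA cj"
  shows "wi * I * w \<in> SA cj"
proof -
  have "w \<noteq> 0"
    using inv by auto
  then obtain Ni where N: "nrm cj w \<in> center" "nrm cj w * Ni = 1" "Ni * nrm cj w = 1"
    using w unfolding CA_def invertible_el_def by auto
  define N where "N = nrm cj w"
  have cj_w: "cj w = wi * N"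
    unfolding N_def nrm_def using inv(2) by (simp flip: mult.assoc)
  have "cj wi * wi * N = 1"
    using arg_cong[OF inv(1), of cj] by (simp add: cj_w mult.assoc)
  then have "cj wi * wi = Ni"
    using N(2) unfolding N_def by (metis mult.assoc mult_1_left mult_1_right)
  then have cj_wi: "cj wi = Ni * w"
    using inv(2) by (metis mult.assoc mult_1_right)
  have "cj (wi * I * w) = - (wi * I * (N * Ni) * w)"
    using center_commute[OF N(1)] SA_cj[OF I]
    by (simp add: cj_w cj_wi N_def mult.assoc)
  moreover have "wi * I * w * (wi * I * w) = - 1"
  proof -
    have "wi * I * w * (wi * I * w) = wi * (I * ((w * wi) * (I * w)))"
      by (simp add: mult.assoc)
    then show ?thesis
      using inv SA_mult_mult[OF I] by simp
  qed
  ultimately show ?thesis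
    using N(2) unfolding SA_iff N_def by simp
qed

definition unit_zeros :: "'a \<Rightarrow> 'a \<Rightarrow> 'a set" where
  "unit_zeros a b = {I \<in> SA cj. a + I * b = 0}"

lemma vanish_at_opposite_units:
  assumes J: "J \<in> SA cj" and "a + J * b = 0" "a + (- J) * b = 0"
  shows "a = 0 \<and> b = 0"
proof -
  have "(2::real) *\<^sub>R (J * b) = 0"
    using assms(2,3) by (simp add: scaleR_2 algebra_simps)
  then have "J * (J * b) = 0"
    by simp
  then have "b = 0"
    by (simp add: SA_mult_mult[OF J])
  with assms(2) show ?thesis
    by simp
qed

lemma unit_zeros_singleton_nonzero:
  assumes "unit_zeros a b = {I0}"
  shows "b \<noteq> 0"
proof
  assume "b = 0"
  with assms have "a = 0" "I0 \<in> SA cj"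
    unfolding unit_zeros_def by auto
  with \<open>b = 0\<close> have "- I0 \<in> unit_zeros a b"
    unfolding unit_zeros_def by (simp add: SA_uminus)
  with assms SA_uminus_neq[OF \<open>I0 \<in> SA cj\<close>] show False
    by simp
qed

lemma unit_zeros_subsingleton:
  assumes e: "e \<in> CA cj" "e \<noteq> 0" and I: "I \<in> unit_zeros p e"
  shows "unit_zeros p e = {I}"
proof -
  obtain ei where ei: "e * ei = 1"
    using CA_invertible[OF e] unfolding invertible_el_def by blast
  have "I' = I" if "I' \<in> unit_zeros p e" for I'
  proof -
    have "p + I' * e = p + I * e"
      using I that unfolding unit_zeros_def by simp
    then have "I' * e = I * e"
      by (rule add_left_imp_eq)
    then have "I' * e * ei = I * e * ei"
      by simp
    with ei show ?thesis
      by (simp add: mult.assoc)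
  qed
  with I show ?thesis
    by blast
qed

lemma unit_zeros_prod_mem:
  assumes "I0 \<in> unit_zeros a b"
  shows "I0 \<in> unit_zeros (a * c - b * d) (a * d + b * c)"
proof -
  have I0: "I0 \<in> SA cj" and a: "a = - (I0 * b)"
    using assms unfolding unit_zeros_def by (auto simp: eq_neg_iff_add_eq_0)
  have "a * c - b * d + I0 * (a * d + b * c) = 0"
    unfolding a using SA_mult_mult[OF I0] by (simp add: algebra_simps)
  with I0 show ?thesis
    unfolding unit_zeros_def by simp
qed

lemma unit_zeros_prod_eq:
  assumes "I0 \<in> unit_zeros a b" "a * d + b * c \<in> CA cj" "a * d + b * c \<noteq> 0"
  shows "unit_zeros (a * c - b * d) (a * d + b * c) = {I0}"
  using unit_zeros_subsingleton[OF assms(2,3) unit_zeros_prod_mem[OF assms(1)]] .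

lemma unit_zeros_prod_left:
  assumes f: "unit_zeros a b = {I0}" and g: "unit_zeros c d = {}"
    and b: "b \<in> CA cj" and e: "a * d + b * c \<in> CA cj"
  shows "unit_zeros (a * c - b * d) (a * d + b * c) = {I0}"
proof -
  have I0: "I0 \<in> SA cj" and a: "a = - (I0 * b)"
    using f unfolding unit_zeros_def by (auto simp: eq_neg_iff_add_eq_0)
  obtain bi where bi: "b * bi = 1" "bi * b = 1"
    using CA_invertible[OF b unit_zeros_singleton_nonzero[OF f]]
    unfolding invertible_el_def by blast
  have "a * d + b * c \<noteq> 0"
  proof
    assume "a * d + b * c = 0"
    then have "b * c = I0 * b * d"
      unfolding a by (simp add: mult.assoc eq_neg_iff_add_eq_0)
    then have "bi * b * c = bi * I0 * b * d"
      by (simp add: mult.assoc)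
    then have "c + (- (bi * I0 * b)) * d = 0"
      using bi by simp
    moreover have "- (bi * I0 * b) \<in> SA cj"
      using SA_uminus[OF SA_conj[OF b bi I0]] .
    ultimately show False
      using g unfolding unit_zeros_def by blast
  qed
  with f e show ?thesis
    by (simp add: unit_zeros_prod_eq)
qed

lemma stem_prod_right_zero:
  assumes I1: "I1 \<in> SA cj" and c: "c + I1 * d = 0"
  shows "a * d + b * c = (a - b * I1) * d"
    and "a * c - b * d = - ((a - b * I1) * I1 * d)"
proof -
  have c': "c = - (I1 * d)"
    using c by (simp add: eq_neg_iff_add_eq_0)
  show "a * d + b * c = (a - b * I1) * d"
    unfolding c' by (simp add: algebra_simps)
  show "a * c - b * d = - ((a - b * I1) * I1 * d)"
    unfolding c' using SA_mult_mult[OF I1] by (simp add: algebra_simps)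
qed

lemma unit_zeros_empty_imp_neq:
  assumes f: "unit_zeros a b = {}" and b: "b \<in> CA cj" and I1: "I1 \<in> SA cj"
  shows "a \<noteq> b * I1"
proof
  assume a: "a = b * I1"
  show False
  proof (cases "b = 0")
    case True
    with a f I1 show False
      unfolding unit_zeros_def by auto
  next
    case False
    then obtain bi where bi: "b * bi = 1" "bi * b = 1"
      using CA_invertible[OF b] unfolding invertible_el_def by blast
    have "- (b * I1 * bi) \<in> SA cj"
      using SA_uminus[OF SA_conj[OF CA_inverse[OF b bi] bi(2,1) I1]] .
    moreover have "a + (- (b * I1 * bi)) * b = 0"
      unfolding a using bi by (simp add: mult.assoc)
    ultimately show False
      using f unfolding unit_zeros_def by blast
  qed
qed

lemma unit_zeros_prod_right:
  assumes f: "unit_zeros a b = {}" and g: "unit_zeros c d = {I1}"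
    and b: "b \<in> CA cj" and d: "d \<in> CA cj" and e: "a * d + b * c \<in> CA cj"
  defines "w \<equiv> cj a + I1 * cj b"
  shows "w \<in> CA cj - {0}"
    and "unit_zeros (a * c - b * d) (a * d + b * c) = {inv_el w * I1 * w}"
proof -
  have I1: "I1 \<in> SA cj" and c: "c + I1 * d = 0"
    using g unfolding unit_zeros_def by auto
  note prod = stem_prod_right_zero[OF I1 c, of a b]
  obtain di where di: "d * di = 1" "di * d = 1"
    using CA_invertible[OF d unit_zeros_singleton_nonzero[OF g]]
    unfolding invertible_el_def by blast
  define v where "v = a - b * I1"
  have w: "w = cj v"
    unfolding w_def v_def by (simp add: SA_cj[OF I1])
  have "v \<noteq> 0"
    unfolding v_def using unit_zeros_empty_imp_neq[OF f b I1] by simp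
  then have w0: "w \<noteq> 0"
    unfolding w by (metis cj_cj cj_zero)
  have "v = (a * d + b * c) * di"
    unfolding prod v_def using di by (simp add: mult.assoc)
  then have v: "v \<in> CA cj"
    using CA_mult[OF e CA_inverse[OF d di]] by simp
  then have wCA: "w \<in> CA cj"
    unfolding w by (rule CA_cj)
  then obtain u where u: "w * u = 1" "u * w = 1"
    using CA_invertible[OF _ w0] unfolding invertible_el_def by blast
  have central: "w * v \<in> center"
    using v \<open>v \<noteq> 0\<close> unfolding CA_def nrm_def w by auto
  have "u * I1 * w * v = u * (w * v) * I1"
    by (simp add: mult.assoc center_commute[OF central, of I1, symmetric])
  then have "u * I1 * w * v = v * I1"
    using u(2) by (simp flip: mult.assoc)
  then have "u * I1 * w \<in> unit_zeros (a * c - b * d) (a * d + b * c)"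
    unfolding unit_zeros_def prod v_def[symmetric]
    using SA_conj[OF wCA u I1] by (simp flip: mult.assoc)
  moreover have "a * d + b * c \<noteq> 0"
    using \<open>v = (a * d + b * c) * di\<close> \<open>v \<noteq> 0\<close> by auto
  ultimately show "unit_zeros (a * c - b * d) (a * d + b * c) = {inv_el w * I1 * w}"
    using unit_zeros_subsingleton[OF e] inv_el_eq[OF u] by simp
  show "w \<in> CA cj - {0}"
    using wCA w0 by simp
qed

lemma unit_zeros_prod_both_eq_SA:
  assumes I1: "I1 \<in> SA cj" and c: "c + I1 * d = 0" and a: "a = b * I1"
  shows "unit_zeros (a * c - b * d) (a * d + b * c) = SA cj"
  using stem_prod_right_zero[OF I1 c, of a b] a unfolding unit_zeros_def by auto

lemma unit_zeros_prod_both: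
  assumes f: "unit_zeros a b = {I0}" and g: "unit_zeros c d = {I1}"
    and d: "d \<in> CA cj" and e: "a * d + b * c \<in> CA cj" and a: "a \<noteq> b * I1"
  shows "unit_zeros (a * c - b * d) (a * d + b * c) = {I0}"
proof -
  have I1: "I1 \<in> SA cj" and c: "c + I1 * d = 0"
    using g unfolding unit_zeros_def by auto
  obtain di where di: "d * di = 1"
    using CA_invertible[OF d unit_zeros_singleton_nonzero[OF g]]
    unfolding invertible_el_def by blast
  have "a * d + b * c \<noteq> 0"
  proof
    assume "a * d + b * c = 0"
    then have "(a - b * I1) * d * di = 0"
      unfolding stem_prod_right_zero(1)[OF I1 c, symmetric] by simp
    with a di show False
      by (simp add: mult.assoc)
  qed
  with f e show ?thesis
    by (simp add: unit_zeros_prod_eq)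
qed

lemma is_stem_stem_cj: "is_stem D F \<Longrightarrow> is_stem D (stem_cj cj F)"
  unfolding is_stem_def stem_cj_def by simp

lemma stem_value_repr_invariant:
  assumes F: "is_stem D F" and J: "J \<in> SA cj" and J': "J' \<in> SA cj" and z: "Complex \<alpha> \<beta> \<in> D"
    and eq: "of_real \<alpha> + \<beta> *\<^sub>R J = of_real \<alpha>' + \<beta>' *\<^sub>R J'"
  shows "fst (F (Complex \<alpha>' \<beta>')) + J' * snd (F (Complex \<alpha>' \<beta>'))
       = fst (F (Complex \<alpha> \<beta>)) + J * snd (F (Complex \<alpha> \<beta>))"
proof -
  from real_plus_SA_eqD[OF J J' eq]
  have \<alpha>: "\<alpha>' = \<alpha>" and \<beta>J: "\<beta>' *\<^sub>R J' = \<beta> *\<^sub>R J" and \<beta>: "\<beta>' = \<beta> \<or> \<beta>' = - \<beta>"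
    by auto
  consider "\<beta> = 0" | "\<beta>' = \<beta>" "\<beta> \<noteq> 0" | "\<beta>' = - \<beta>" "\<beta> \<noteq> 0"
    using \<beta> by blast
  then show ?thesis
  proof cases
    case 1
    with \<alpha> \<beta> F z show ?thesis
      using stem_real[OF F, of \<alpha>] by auto
  next
    case 2
    with \<alpha> \<beta>J show ?thesis
      by simp
  next
    case 3
    with \<beta>J have "J' = - J"
      by (metis minus_minus scaleR_cancel_left scaleR_minus_left scaleR_minus_right)
    moreover have "Complex \<alpha>' \<beta>' = cnj (Complex \<alpha> \<beta>)"
      using \<alpha> 3 by (simp add: complex_eq_iff)
    ultimately show ?thesis
      using F z unfolding is_stem_def by simp
  qed
qed

lemma slice_eq:
  assumes F: "is_stem D F" and J: "J \<in> SA cj" and z: "Complex \<alpha> \<beta> \<in> D"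
  shows "slice cj F (of_real \<alpha> + \<beta> *\<^sub>R J) = fst (F (Complex \<alpha> \<beta>)) + J * snd (F (Complex \<alpha> \<beta>))"
proof -
  let ?x = "of_real \<alpha> + \<beta> *\<^sub>R J"
  let ?P = "\<lambda>v. \<exists>\<alpha>' \<beta>' J'. J' \<in> SA cj \<and> ?x = of_real \<alpha>' + \<beta>' *\<^sub>R J' \<and>
                   v = fst (F (Complex \<alpha>' \<beta>')) + J' * snd (F (Complex \<alpha>' \<beta>'))"
  have "?P (fst (F (Complex \<alpha> \<beta>)) + J * snd (F (Complex \<alpha> \<beta>)))"
    using J by blast
  then have "?P (SOME v. ?P v)"
    by (rule someI)
  then show ?thesis
    unfolding slice_def using stem_value_repr_invariant[OF F J _ z] by auto
qed

lemma sph_deriv_slice: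
  assumes F: "is_stem D F" and J: "J \<in> SA cj" and \<beta>: "\<beta> \<noteq> 0" and z: "Complex \<alpha> \<beta> \<in> D"
  shows "sph_deriv cj (slice cj F) (of_real \<alpha> + \<beta> *\<^sub>R J) = (1 / \<beta>) *\<^sub>R snd (F (Complex \<alpha> \<beta>))"
proof -
  have cj_x: "cj (of_real \<alpha> + \<beta> *\<^sub>R J) = of_real \<alpha> + \<beta> *\<^sub>R (- J)"
    using SA_cj[OF J] by simp
  have "tr cj (of_real \<alpha> + \<beta> *\<^sub>R J) = (2 * \<alpha>) *\<^sub>R 1"
    unfolding tr_def cj_x by (simp add: of_real_def flip: scaleR_add_left)
  then have "im_part cj (of_real \<alpha> + \<beta> *\<^sub>R J) = \<beta> *\<^sub>R J"
    unfolding im_part_def by (simp add: of_real_def)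
  moreover have "inv_el (\<beta> *\<^sub>R J) = (- 1 / \<beta>) *\<^sub>R J"
    by (rule inv_el_eq) (use \<beta> SA_mult_self[OF J] in auto)
  moreover have "slice cj F (of_real \<alpha> + \<beta> *\<^sub>R J) - slice cj F (of_real \<alpha> + \<beta> *\<^sub>R (- J))
      = (2::real) *\<^sub>R (J * snd (F (Complex \<alpha> \<beta>)))"
    unfolding slice_eq[OF F J z] slice_eq[OF F SA_uminus[OF J] z] by (simp add: scaleR_2)
  ultimately show ?thesis
    unfolding sph_deriv_def cj_x using \<beta> by (simp add: SA_mult_mult[OF J])
qed

lemma Omega_memI: "Complex \<alpha> \<beta> \<in> D \<Longrightarrow> I \<in> SA cj \<Longrightarrow> of_real \<alpha> + \<beta> *\<^sub>R I \<in> Omega cj D"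
  unfolding Omega_def by (rule CollectI, rule exI[of _ "Complex \<alpha> \<beta>"], rule exI[of _ I]) simp

lemma OmegaE:
  assumes "x \<in> Omega cj D"
  obtains \<alpha> \<beta> J where "J \<in> SA cj" "Complex \<alpha> \<beta> \<in> D" "x = of_real \<alpha> + \<beta> *\<^sub>R J"
proof -
  from assms obtain z J where "z \<in> D" "J \<in> SA cj" "x = of_real (Re z) + Im z *\<^sub>R J"
    unfolding Omega_def by blast
  moreover from \<open>z \<in> D\<close> have "Complex (Re z) (Im z) \<in> D"
    by simp
  ultimately show thesis
    using that by blast
qed

lemma Sx_eq_image:
  assumes J: "J \<in> SA cj"
  shows "Sx cj (of_real \<alpha> + \<beta> *\<^sub>R J) = (\<lambda>I. of_real \<alpha> + \<beta> *\<^sub>R I) ` SA cj"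
proof
  show "(\<lambda>I. of_real \<alpha> + \<beta> *\<^sub>R I) ` SA cj \<subseteq> Sx cj (of_real \<alpha> + \<beta> *\<^sub>R J)"
    unfolding Sx_def using J by blast
  show "Sx cj (of_real \<alpha> + \<beta> *\<^sub>R J) \<subseteq> (\<lambda>I. of_real \<alpha> + \<beta> *\<^sub>R I) ` SA cj"
  proof
    fix y
    assume "y \<in> Sx cj (of_real \<alpha> + \<beta> *\<^sub>R J)"
    then obtain \<alpha>' \<beta>' J' I where J': "J' \<in> SA cj" and I: "I \<in> SA cj"
      and eq: "of_real \<alpha> + \<beta> *\<^sub>R J = of_real \<alpha>' + \<beta>' *\<^sub>R J'" and y: "y = of_real \<alpha>' + \<beta>' *\<^sub>R I"
      unfolding Sx_def by blast
    from real_plus_SA_eqD[OF J J' eq] have "\<alpha>' = \<alpha>" "\<beta>' = \<beta> \<or> \<beta>' = - \<beta>"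
      by auto
    then have "y = of_real \<alpha> + \<beta> *\<^sub>R I \<or> y = of_real \<alpha> + \<beta> *\<^sub>R (- I)"
      using y by auto
    with I SA_uminus[OF I] show "y \<in> (\<lambda>I. of_real \<alpha> + \<beta> *\<^sub>R I) ` SA cj"
      by blast
  qed
qed

lemma Sx_inter_zeros_slice:
  assumes H: "is_stem D H" and J: "J \<in> SA cj" and z: "Complex \<alpha> \<beta> \<in> D"
  shows "Sx cj (of_real \<alpha> + \<beta> *\<^sub>R J) \<inter> zeros (Omega cj D) (slice cj H)
       = (\<lambda>I. of_real \<alpha> + \<beta> *\<^sub>R I) ` unit_zeros (fst (H (Complex \<alpha> \<beta>))) (snd (H (Complex \<alpha> \<beta>)))"
  unfolding Sx_eq_image[OF J] zeros_def unit_zeros_def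
  using Omega_memI[OF z] slice_eq[OF H _ z] by auto

lemma stem_zero_of_Sx_subset:
  assumes H: "is_stem D H" and J: "J \<in> SA cj" and z: "Complex \<alpha> \<beta> \<in> D"
    and sub: "Sx cj (of_real \<alpha> + \<beta> *\<^sub>R J) \<subseteq> zeros (Omega cj D) (slice cj H)"
  shows "H (Complex \<alpha> \<beta>) = (0, 0)"
proof -
  have zero: "fst (H (Complex \<alpha> \<beta>)) + I * snd (H (Complex \<alpha> \<beta>)) = 0" if I: "I \<in> SA cj" for I
  proof -
    have "of_real \<alpha> + \<beta> *\<^sub>R I \<in> Sx cj (of_real \<alpha> + \<beta> *\<^sub>R J)"
      unfolding Sx_eq_image[OF J] using I by (rule imageI)
    with sub have "slice cj H (of_real \<alpha> + \<beta> *\<^sub>R I) = 0"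
      unfolding zeros_def by blast
    then show ?thesis
      by (simp only: slice_eq[OF H I z])
  qed
  show ?thesis
    using vanish_at_opposite_units[OF J zero[OF J] zero[OF SA_uminus[OF J]]] by (simp add: prod_eq_iff)
qed

lemma slice_prod_zero_real:
  assumes F: "is_stem D F" and G: "is_stem D G" and x: "x \<in> Omega cj D" "x \<in> \<real>"
    and zero: "x \<in> zeros (Omega cj D) (slice cj F) \<union> zeros (Omega cj D) (slice cj G)"
  shows "x \<in> zeros (Omega cj D) (slice cj (stem_prod F G))"
proof -
  obtain \<alpha> \<beta> J where J: "J \<in> SA cj" and z: "Complex \<alpha> \<beta> \<in> D" and x_eq: "x = of_real \<alpha> + \<beta> *\<^sub>R J"
    using x(1) by (rule OmegaE)
  have "\<beta> = 0"
    using x(2) real_plus_SA_in_Reals_iff[OF J] x_eq by simp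
  with z have "snd (F (Complex \<alpha> \<beta>)) = 0" "snd (G (Complex \<alpha> \<beta>)) = 0"
    using stem_real F G by blast+
  moreover have "slice cj F x = 0 \<or> slice cj G x = 0"
    using zero unfolding zeros_def by auto
  ultimately show ?thesis
    using x(1) unfolding zeros_def x_eq
    by (auto simp: slice_eq[OF F J z] slice_eq[OF G J z]
        slice_eq[OF is_stem_stem_prod[OF F G] J z] stem_prod_eq)
qed

lemma slice_prod_vanish_Sx:
  assumes F: "is_stem D F" and G: "is_stem D G" and x: "x \<in> Omega cj D"
    and vanish: "Sx cj x \<subseteq> zeros (Omega cj D) (slice cj F) \<or> Sx cj x \<subseteq> zeros (Omega cj D) (slice cj G)"
  shows "Sx cj x \<subseteq> zeros (Omega cj D) (slice cj (stem_prod F G))"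
proof -
  obtain \<alpha> \<beta> J where J: "J \<in> SA cj" and z: "Complex \<alpha> \<beta> \<in> D" and x_eq: "x = of_real \<alpha> + \<beta> *\<^sub>R J"
    using x by (rule OmegaE)
  have "F (Complex \<alpha> \<beta>) = (0, 0) \<or> G (Complex \<alpha> \<beta>) = (0, 0)"
    using vanish stem_zero_of_Sx_subset[OF F J z] stem_zero_of_Sx_subset[OF G J z]
    unfolding x_eq by blast
  then have "unit_zeros (fst (stem_prod F G (Complex \<alpha> \<beta>))) (snd (stem_prod F G (Complex \<alpha> \<beta>))) = SA cj"
    unfolding unit_zeros_def stem_prod_eq by auto
  then have "Sx cj x \<inter> zeros (Omega cj D) (slice cj (stem_prod F G)) = (\<lambda>I. of_real \<alpha> + \<beta> *\<^sub>R I) ` SA cj"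
    unfolding x_eq Sx_inter_zeros_slice[OF is_stem_stem_prod[OF F G] J z] by simp
  then show ?thesis
    unfolding x_eq Sx_eq_image[OF J] by blast
qed

lemma commute_sph_deriv_iff:
  assumes I0: "I0 \<in> SA cj" and a: "a + I0 * b = 0" and \<beta>: "\<beta> \<noteq> 0"
  shows "cj (of_real \<alpha> + \<beta> *\<^sub>R I0) * ((1 / \<beta>) *\<^sub>R b) = ((1 / \<beta>) *\<^sub>R b) * (of_real \<alpha> + \<beta> *\<^sub>R I1)
     \<longleftrightarrow> a = b * I1"
proof -
  have "cj (of_real \<alpha> + \<beta> *\<^sub>R I0) = of_real \<alpha> - \<beta> *\<^sub>R I0"
    using SA_cj[OF I0] by simp
  moreover have "a = - (I0 * b)"
    using a by (simp add: eq_neg_iff_add_eq_0)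
  ultimately have "cj (of_real \<alpha> + \<beta> *\<^sub>R I0) * ((1 / \<beta>) *\<^sub>R b) = (\<alpha> / \<beta>) *\<^sub>R b + a"
    using \<beta> by (simp add: algebra_simps of_real_def SA_cj[OF I0])
  moreover have "((1 / \<beta>) *\<^sub>R b) * (of_real \<alpha> + \<beta> *\<^sub>R I1) = (\<alpha> / \<beta>) *\<^sub>R b + b * I1"
    using \<beta> by (simp add: algebra_simps of_real_def)
  ultimately show ?thesis
    by simp
qed

context
  fixes D :: "complex set" and F G :: "complex \<Rightarrow> 'a \<times> 'a" and \<alpha> \<beta> :: real and J x :: 'a
  assumes F: "is_stem D F" and G: "is_stem D G"
    and J: "J \<in> SA cj" and z: "Complex \<alpha> \<beta> \<in> D" and \<beta>: "\<beta> \<noteq> 0"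
    and x: "x = of_real \<alpha> + \<beta> *\<^sub>R J"
begin

private lemma inj_sphere_point: "inj (\<lambda>I. of_real \<alpha> + \<beta> *\<^sub>R I :: 'a)"
  using \<beta> by (auto intro: injI)

private lemma Sx_inter_zeros:
  "is_stem D H \<Longrightarrow> Sx cj x \<inter> zeros (Omega cj D) (slice cj H)
     = (\<lambda>I. of_real \<alpha> + \<beta> *\<^sub>R I) ` unit_zeros (fst (H (Complex \<alpha> \<beta>))) (snd (H (Complex \<alpha> \<beta>)))"
  unfolding x by (rule Sx_inter_zeros_slice[OF _ J z])

private lemma Sx_inter_zeros_singletonE:
  assumes "is_stem D H" "Sx cj x \<inter> zeros (Omega cj D) (slice cj H) = {y}"
  obtains I0 where "unit_zeros (fst (H (Complex \<alpha> \<beta>))) (snd (H (Complex \<alpha> \<beta>))) = {I0}"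
    "y = of_real \<alpha> + \<beta> *\<^sub>R I0"
  using inj_image_eq_singleton[OF inj_sphere_point] assms Sx_inter_zeros by metis

private lemma sph_deriv_in_CA_iff:
  "is_stem D H \<Longrightarrow> sph_deriv cj (slice cj H) x \<in> CA cj \<longleftrightarrow> snd (H (Complex \<alpha> \<beta>)) \<in> CA cj"
  unfolding x sph_deriv_slice[OF _ J \<beta> z]
  using CA_scaleR[of _ "1 / \<beta>"] CA_scaleR[of "(1 / \<beta>) *\<^sub>R _" \<beta>] \<beta> by auto

private lemma Sx_inter_zeros_prod:
  "Sx cj x \<inter> zeros (Omega cj D) (slice cj (stem_prod F G))
     = (\<lambda>I. of_real \<alpha> + \<beta> *\<^sub>R I) `
         unit_zeros (fst (F (Complex \<alpha> \<beta>)) * fst (G (Complex \<alpha> \<beta>)) - snd (F (Complex \<alpha> \<beta>)) * snd (G (Complex \<alpha> \<beta>)))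
           (fst (F (Complex \<alpha> \<beta>)) * snd (G (Complex \<alpha> \<beta>)) + snd (F (Complex \<alpha> \<beta>)) * fst (G (Complex \<alpha> \<beta>)))"
  using Sx_inter_zeros[OF is_stem_stem_prod[OF F G]] by (simp add: stem_prod_eq)

private lemma sph_deriv_prod_in_CA_iff:
  "sph_deriv cj (slice cj (stem_prod F G)) x \<in> CA cj
     \<longleftrightarrow> fst (F (Complex \<alpha> \<beta>)) * snd (G (Complex \<alpha> \<beta>)) + snd (F (Complex \<alpha> \<beta>)) * fst (G (Complex \<alpha> \<beta>)) \<in> CA cj"
  using sph_deriv_in_CA_iff[OF is_stem_stem_prod[OF F G]] by (simp add: stem_prod_eq)

lemma slice_prod_Sx_zeros_left:
  assumes "sph_deriv cj (slice cj F) x \<in> CA cj" "sph_deriv cj (slice cj (stem_prod F G)) x \<in> CA cj"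
    and f: "Sx cj x \<inter> zeros (Omega cj D) (slice cj F) = {y}"
    and g: "Sx cj x \<inter> zeros (Omega cj D) (slice cj G) = {}"
  shows "Sx cj x \<inter> zeros (Omega cj D) (slice cj (stem_prod F G)) = {y}"
proof -
  obtain I0 where I0: "unit_zeros (fst (F (Complex \<alpha> \<beta>))) (snd (F (Complex \<alpha> \<beta>))) = {I0}"
    and y: "y = of_real \<alpha> + \<beta> *\<^sub>R I0"
    using Sx_inter_zeros_singletonE[OF F f] .
  from g have "unit_zeros (fst (G (Complex \<alpha> \<beta>))) (snd (G (Complex \<alpha> \<beta>))) = {}"
    unfolding Sx_inter_zeros[OF G] by simp
  with I0 assms(1,2) show ?thesis
    unfolding Sx_inter_zeros_prod y sph_deriv_in_CA_iff[OF F] sph_deriv_prod_in_CA_iff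
    by (simp add: unit_zeros_prod_left)
qed

lemma slice_prod_Sx_zeros_right:
  assumes CA: "sph_deriv cj (slice cj F) x \<in> CA cj" "sph_deriv cj (slice cj G) x \<in> CA cj"
      "sph_deriv cj (slice cj (stem_prod F G)) x \<in> CA cj"
    and f: "Sx cj x \<inter> zeros (Omega cj D) (slice cj F) = {}"
    and g: "Sx cj x \<inter> zeros (Omega cj D) (slice cj G) = {y}"
  defines "w \<equiv> slice cj (stem_cj cj F) y"
  shows "w \<in> CA cj - {0}"
    and "Sx cj x \<inter> zeros (Omega cj D) (slice cj (stem_prod F G)) = {inv_el w * y * w}"
proof -
  obtain I1 where I1: "unit_zeros (fst (G (Complex \<alpha> \<beta>))) (snd (G (Complex \<alpha> \<beta>))) = {I1}"
    and y: "y = of_real \<alpha> + \<beta> *\<^sub>R I1"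
    using Sx_inter_zeros_singletonE[OF G g] .
  then have "I1 \<in> SA cj"
    unfolding unit_zeros_def by blast
  then have w: "w = cj (fst (F (Complex \<alpha> \<beta>))) + I1 * cj (snd (F (Complex \<alpha> \<beta>)))"
    unfolding w_def y by (simp add: slice_eq[OF is_stem_stem_cj[OF F] _ z] stem_cj_def)
  from f have "unit_zeros (fst (F (Complex \<alpha> \<beta>))) (snd (F (Complex \<alpha> \<beta>))) = {}"
    unfolding Sx_inter_zeros[OF F] by simp
  note right = unit_zeros_prod_right[OF this I1
      CA[unfolded sph_deriv_in_CA_iff[OF F] sph_deriv_in_CA_iff[OF G] sph_deriv_prod_in_CA_iff],
      folded w]
  show "w \<in> CA cj - {0}"
    using right(1) .
  then obtain u where u: "w * u = 1" "u * w = 1"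
    using CA_invertible unfolding invertible_el_def by blast
  show "Sx cj x \<inter> zeros (Omega cj D) (slice cj (stem_prod F G)) = {inv_el w * y * w}"
    unfolding Sx_inter_zeros_prod right(2)
    using inv_el_eq[OF u] conj_of_real_plus_scaleR[OF u(2)] y by simp
qed

lemma slice_prod_Sx_zeros_both:
  assumes CA: "sph_deriv cj (slice cj G) x \<in> CA cj" "sph_deriv cj (slice cj (stem_prod F G)) x \<in> CA cj"
    and f: "Sx cj x \<inter> zeros (Omega cj D) (slice cj F) = {y}"
    and g: "Sx cj x \<inter> zeros (Omega cj D) (slice cj G) = {y'}"
  shows "if cj y * sph_deriv cj (slice cj F) x = sph_deriv cj (slice cj F) x * y'
         then Sx cj x \<subseteq> zeros (Omega cj D) (slice cj (stem_prod F G))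
         else Sx cj x \<inter> zeros (Omega cj D) (slice cj (stem_prod F G)) = {y}"
proof -
  obtain I0 where I0: "unit_zeros (fst (F (Complex \<alpha> \<beta>))) (snd (F (Complex \<alpha> \<beta>))) = {I0}"
    and y: "y = of_real \<alpha> + \<beta> *\<^sub>R I0"
    using Sx_inter_zeros_singletonE[OF F f] .
  obtain I1 where I1: "unit_zeros (fst (G (Complex \<alpha> \<beta>))) (snd (G (Complex \<alpha> \<beta>))) = {I1}"
    and y': "y' = of_real \<alpha> + \<beta> *\<^sub>R I1"
    using Sx_inter_zeros_singletonE[OF G g] .
  have zero_I0: "I0 \<in> SA cj" "fst (F (Complex \<alpha> \<beta>)) + I0 * snd (F (Complex \<alpha> \<beta>)) = 0"
    and zero_I1: "I1 \<in> SA cj" "fst (G (Complex \<alpha> \<beta>)) + I1 * snd (G (Complex \<alpha> \<beta>)) = 0"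
    using I0 I1 unfolding unit_zeros_def by blast+
  note CA' = CA[unfolded sph_deriv_in_CA_iff[OF G] sph_deriv_prod_in_CA_iff]
  have commute_iff: "cj y * sph_deriv cj (slice cj F) x = sph_deriv cj (slice cj F) x * y'
      \<longleftrightarrow> fst (F (Complex \<alpha> \<beta>)) = snd (F (Complex \<alpha> \<beta>)) * I1"
    unfolding x y y' sph_deriv_slice[OF F J \<beta> z] by (rule commute_sph_deriv_iff[OF zero_I0 \<beta>])
  show ?thesis
  proof (cases "fst (F (Complex \<alpha> \<beta>)) = snd (F (Complex \<alpha> \<beta>)) * I1")
    case True
    have "Sx cj x \<inter> zeros (Omega cj D) (slice cj (stem_prod F G)) = Sx cj x"
      unfolding Sx_inter_zeros_prod unit_zeros_prod_both_eq_SA[OF zero_I1 True]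
      unfolding x by (rule Sx_eq_image[OF J, symmetric])
    with True commute_iff show ?thesis
      by auto
  next
    case False
    then have "Sx cj x \<inter> zeros (Omega cj D) (slice cj (stem_prod F G)) = {y}"
      unfolding Sx_inter_zeros_prod unit_zeros_prod_both[OF I0 I1 CA' False] y by simp
    with False commute_iff show ?thesis
      by simp
  qed
qed

end

lemma slice_prod_zeros_nonreal:
  assumes F: "is_stem D F" and G: "is_stem D G" and x: "x \<in> Omega cj D - \<real>"
    and CA: "sph_deriv cj (slice cj F) x \<in> CA cj" "sph_deriv cj (slice cj G) x \<in> CA cj"
      "sph_deriv cj (slice cj (stem_prod F G)) x \<in> CA cj"
  defines "\<Omega> \<equiv> Omega cj D"
  shows "(\<forall>y. Sx cj x \<inter> zeros \<Omega> (slice cj F) = {y} \<and> Sx cj x \<inter> zeros \<Omega> (slice cj G) = {}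
           \<longrightarrow> Sx cj x \<inter> zeros \<Omega> (slice cj (stem_prod F G)) = {y})
     \<and> (\<forall>z. Sx cj x \<inter> zeros \<Omega> (slice cj F) = {} \<and> Sx cj x \<inter> zeros \<Omega> (slice cj G) = {z}
           \<longrightarrow> slice cj (stem_cj cj F) z \<in> CA cj - {0}
             \<and> Sx cj x \<inter> zeros \<Omega> (slice cj (stem_prod F G))
                 = {inv_el (slice cj (stem_cj cj F) z) * z * slice cj (stem_cj cj F) z})
     \<and> (\<forall>y z. Sx cj x \<inter> zeros \<Omega> (slice cj F) = {y} \<and> Sx cj x \<inter> zeros \<Omega> (slice cj G) = {z}
           \<longrightarrow> (if cj y * sph_deriv cj (slice cj F) x = sph_deriv cj (slice cj F) x * z
                then Sx cj x \<subseteq> zeros \<Omega> (slice cj (stem_prod F G))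
                else Sx cj x \<inter> zeros \<Omega> (slice cj (stem_prod F G)) = {y}))"
proof -
  obtain \<alpha> \<beta> J where J: "J \<in> SA cj" and z: "Complex \<alpha> \<beta> \<in> D" and x_eq: "x = of_real \<alpha> + \<beta> *\<^sub>R J"
    using x by (blast elim: OmegaE)
  have "\<beta> \<noteq> 0"
    using x real_plus_SA_in_Reals_iff[OF J] x_eq by simp
  note left = slice_prod_Sx_zeros_left[OF F G J z \<open>\<beta> \<noteq> 0\<close> x_eq CA(1,3)]
  note right = slice_prod_Sx_zeros_right[OF F G J z \<open>\<beta> \<noteq> 0\<close> x_eq CA]
  note both = slice_prod_Sx_zeros_both[OF F G J z \<open>\<beta> \<noteq> 0\<close> x_eq CA(2,3)]
  show ?thesis
    unfolding \<Omega>_def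
  proof (intro conjI allI impI; elim conjE)
    fix y
    assume "Sx cj x \<inter> zeros (Omega cj D) (slice cj F) = {y}" "Sx cj x \<inter> zeros (Omega cj D) (slice cj G) = {}"
    then show "Sx cj x \<inter> zeros (Omega cj D) (slice cj (stem_prod F G)) = {y}"
      by (rule left)
  next
    fix y
    assume "Sx cj x \<inter> zeros (Omega cj D) (slice cj F) = {}" "Sx cj x \<inter> zeros (Omega cj D) (slice cj G) = {y}"
    then show "slice cj (stem_cj cj F) y \<in> CA cj - {0}"
      and "Sx cj x \<inter> zeros (Omega cj D) (slice cj (stem_prod F G))
             = {inv_el (slice cj (stem_cj cj F) y) * y * slice cj (stem_cj cj F) y}"
      by (rule right(1), rule right(2))
  next
    fix y y'
    assume "Sx cj x \<inter> zeros (Omega cj D) (slice cj F) = {y}" "Sx cj x \<inter> zeros (Omega cj D) (slice cj G) = {y'}"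
    then show "if cj y * sph_deriv cj (slice cj F) x = sph_deriv cj (slice cj F) x * y'
               then Sx cj x \<subseteq> zeros (Omega cj D) (slice cj (stem_prod F G))
               else Sx cj x \<inter> zeros (Omega cj D) (slice cj (stem_prod F G)) = {y}"
      by (rule both)
  qed
qed

end

theorem theorem5p12:
  fixes cj :: "'a::real_algebra_1 \<Rightarrow> 'a"
    and D :: "complex set"
    and F G :: "complex \<Rightarrow> 'a \<times> 'a"
  assumes fd: "fin_dim_alg TYPE('a)"
    and inv: "star_involution cj"
    and SA_ne: "SA cj \<noteq> {}"
    and D_ne: "D \<noteq> {}"
    and D_cnj: "\<forall>z\<in>D. cnj z \<in> D"
    and F: "is_stem D F" and G: "is_stem D G"
  defines "f \<equiv> slice cj F" and "g \<equiv> slice cj G"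
    and "fg \<equiv> slice cj (stem_prod F G)"
    and "fc \<equiv> slice cj (stem_cj cj F)"
    and "\<Omega> \<equiv> Omega cj D"
  shows
    "(\<forall>x\<in>\<Omega>. x \<in> \<real> \<longrightarrow> x \<in> zeros \<Omega> f \<union> zeros \<Omega> g \<longrightarrow> x \<in> zeros \<Omega> fg)
     \<and> (\<forall>x\<in>\<Omega>. Sx cj x \<subseteq> zeros \<Omega> f \<or> Sx cj x \<subseteq> zeros \<Omega> g \<longrightarrow> Sx cj x \<subseteq> zeros \<Omega> fg)
     \<and> (\<forall>x\<in>\<Omega> - \<real>. sph_deriv cj f x \<in> CA cj \<longrightarrow> sph_deriv cj g x \<in> CA cj
            \<longrightarrow> sph_deriv cj fg x \<in> CA cj \<longrightarrow>
          (\<forall>y. Sx cj x \<inter> zeros \<Omega> f = {y} \<and> Sx cj x \<inter> zeros \<Omega> g = {}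
                 \<longrightarrow> Sx cj x \<inter> zeros \<Omega> fg = {y})
        \<and> (\<forall>z. Sx cj x \<inter> zeros \<Omega> f = {} \<and> Sx cj x \<inter> zeros \<Omega> g = {z}
                 \<longrightarrow> fc z \<in> CA cj - {0}
                   \<and> Sx cj x \<inter> zeros \<Omega> fg = {inv_el (fc z) * z * fc z})
        \<and> (\<forall>y z. Sx cj x \<inter> zeros \<Omega> f = {y} \<and> Sx cj x \<inter> zeros \<Omega> g = {z}
                 \<longrightarrow> (if cj y * sph_deriv cj f x = sph_deriv cj f x * z
                      then Sx cj x \<subseteq> zeros \<Omega> fg
                      else Sx cj x \<inter> zeros \<Omega> fg = {y})))"
proof -
  interpret star_algebra cj
    using inv by unfold_locales
  show ?thesis
    unfolding f_def g_def fg_def fc_def \<Omega>_def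
    by (simp add: slice_prod_zero_real[OF F G] slice_prod_vanish_Sx[OF F G]
        slice_prod_zeros_nonreal[OF F G] del: Diff_iff)
qed

end
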